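(* Let $\varepsilon \in (0,1/2]$ be the solution of $1 - H(\varepsilon) = \varepsilon/8$ (so $\varepsilon \approx 0.3735$), and let $\delta = \varepsilon/8 \approx 0.047$ and $c = \frac{1}{4}\log_2 \frac{9}{5} \approx 0.212$. Then the number $V(3,d)$ of vertices of $\Omega_3^d$ satisfies $$\log_2 V(3,d) \geq c\, 2^{\delta d}\,(1+o(1)) \quad \text{as } d \to \infty.$$ In particular, $V(3,d)$ grows doubly exponentially in $d$.
   Context: $H(x) = -x\log_2 x - (1-x)\log_2(1-x)$ is the binary entropy function. For integers $n,d \geq 1$ let $I_n^d = \{\alpha = (\alpha_1,\ldots,\alpha_d) : \alpha_i \in \{1,\ldots,n\}\}$. A $d$-dimensional matrix of order $n$ is an array $A = (a_\alpha)_{\alpha \in I_n^d}$ of real numbers. A line of $A$ is the set of entries obtained by fixing all but one coordinate of the index and letting the remaining coordinate range over $\{1,\ldots,n\}$. A matrix is polystochastic if all its entries are nonnegative and the sum of entries in each line equals $1$. $\Omega_n^d$ denotes the convex polytope (in $\mathbb{R}^{n^d}$) of all $d$-dimensional polystochastic matrices of order $n$, and $V(n,d)$ is its number of vertices (extreme points). *)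

theory Defs
  imports Complex_Main "HOL-Library.FuncSet"
begin

definition bin_entropy :: "real \<Rightarrow> real" where
  "bin_entropy x = - x * log 2 x - (1 - x) * log 2 (1 - x)"

definition index_set :: "nat \<Rightarrow> nat \<Rightarrow> (nat \<Rightarrow> nat) set" where
  "index_set n d = ({0..<d} \<rightarrow>\<^sub>E {1..n})"

text \<open>A d-dimensional matrix of order n is a real function on the index set;
  we represent it as a function on all indices which vanishes outside I_n^d.\<close>
definition polystochastic :: "nat \<Rightarrow> nat \<Rightarrow> ((nat \<Rightarrow> nat) \<Rightarrow> real) \<Rightarrow> bool" where
  "polystochastic n d A \<longleftrightarrow>
     (\<forall>\<alpha>. \<alpha> \<notin> index_set n d \<longrightarrow> A \<alpha> = 0) \<and>
     (\<forall>\<alpha>\<in>index_set n d. A \<alpha> \<ge> 0) \<and>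
     (\<forall>\<alpha>\<in>index_set n d. \<forall>i<d. (\<Sum>k\<in>{1..n}. A (\<alpha>(i := k))) = 1)"

definition Omega :: "nat \<Rightarrow> nat \<Rightarrow> ((nat \<Rightarrow> nat) \<Rightarrow> real) set" where
  "Omega n d = {A. polystochastic n d A}"

definition is_vertex :: "((nat \<Rightarrow> nat) \<Rightarrow> real) set \<Rightarrow> ((nat \<Rightarrow> nat) \<Rightarrow> real) \<Rightarrow> bool" where
  "is_vertex S A \<longleftrightarrow> A \<in> S \<and>
     \<not> (\<exists>B\<in>S. \<exists>C\<in>S. B \<noteq> C \<and> (\<exists>t::real. 0 < t \<and> t < 1 \<and>
           A = (\<lambda>\<alpha>. t * B \<alpha> + (1 - t) * C \<alpha>)))"

definition num_vertices :: "nat \<Rightarrow> nat \<Rightarrow> nat" where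
  "num_vertices n d = card {A. is_vertex (Omega n d) A}"

end

theory Submission
  imports Defs
begin

text \<open>
  Call a family of polystochastic matrices separated if no polystochastic matrix is supported
  inside the common support of two distinct members. Minimising the support shows that every
  polystochastic matrix has a vertex supported inside its own support; for a separated family
  these vertices are pairwise distinct, so V(n,d) bounds the size of every separated family.

  Separated families of order 3 square in size when the dimension grows by 3. A fixed
  3-dimensional gadget glues two d-dimensional matrices A and B into a (d+3)-dimensional
  polystochastic matrix having A and B as slices; since slices of polystochastic matrices are
  polystochastic, distinct pairs from a separated family glue to a separated family. Starting
  from two Latin hypercubes with disjoint supports, this yields log2 V(3,d) \<ge> 2^((d-1) div 3),
  which dominates c 2^(\<epsilon> d/8) for every \<epsilon> \<le> 1/2.
\<close>

section \<open>Supports and vertices\<close>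

definition support :: "((nat \<Rightarrow> nat) \<Rightarrow> real) \<Rightarrow> (nat \<Rightarrow> nat) set" where
  "support A = {\<alpha>. A \<alpha> \<noteq> 0}"

lemma finite_index_set: "finite (index_set n d)"
  unfolding index_set_def by (simp add: finite_PiE)

lemma index_set_upd: "\<alpha> \<in> index_set n d \<Longrightarrow> i < d \<Longrightarrow> k \<in> {1..n} \<Longrightarrow> \<alpha>(i := k) \<in> index_set n d"
  unfolding index_set_def by (auto simp: PiE_iff extensional_def)

lemma index_set_range: "\<alpha> \<in> index_set n d \<Longrightarrow> i < d \<Longrightarrow> \<alpha> i \<in> {1..n}"
  unfolding index_set_def by auto

lemma restrict_in_index_set: "\<alpha> \<in> index_set n (d + m) \<Longrightarrow> restrict \<alpha> {0..<d} \<in> index_set n d"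
  unfolding index_set_def by (auto simp: PiE_iff)

lemma constant_in_index_set: "c \<in> {1..n} \<Longrightarrow> restrict (\<lambda>_. c) {0..<d} \<in> index_set n d"
  unfolding index_set_def by auto

lemma OmegaI:
  assumes "\<And>\<alpha>. \<alpha> \<notin> index_set n d \<Longrightarrow> A \<alpha> = 0"
    and "\<And>\<alpha>. \<alpha> \<in> index_set n d \<Longrightarrow> 0 \<le> A \<alpha>"
    and "\<And>\<alpha> i. \<alpha> \<in> index_set n d \<Longrightarrow> i < d \<Longrightarrow> (\<Sum>k\<in>{1..n}. A (\<alpha>(i := k))) = 1"
  shows "A \<in> Omega n d"
  using assms unfolding Omega_def polystochastic_def by blast

lemma Omega_outside: "A \<in> Omega n d \<Longrightarrow> \<alpha> \<notin> index_set n d \<Longrightarrow> A \<alpha> = 0"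
  unfolding Omega_def polystochastic_def by blast

lemma Omega_nonneg: "A \<in> Omega n d \<Longrightarrow> 0 \<le> A \<alpha>"
  unfolding Omega_def polystochastic_def by (cases "\<alpha> \<in> index_set n d") auto

lemma Omega_line_sum:
  "A \<in> Omega n d \<Longrightarrow> \<alpha> \<in> index_set n d \<Longrightarrow> i < d \<Longrightarrow> (\<Sum>k\<in>{1..n}. A (\<alpha>(i := k))) = 1"
  unfolding Omega_def polystochastic_def by blast

lemma Omega_le_one:
  assumes A: "A \<in> Omega n d" and "0 < d"
  shows "A \<alpha> \<le> 1"
proof (cases "\<alpha> \<in> index_set n d")
  case True
  then have "A (\<alpha>(0 := \<alpha> 0)) \<le> (\<Sum>k\<in>{1..n}. A (\<alpha>(0 := k)))"
    using index_set_range[OF True \<open>0 < d\<close>] Omega_nonneg[OF A] by (intro member_le_sum) auto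
  with Omega_line_sum[OF A True \<open>0 < d\<close>] show ?thesis by simp
qed (simp add: Omega_outside[OF A])

lemma support_Omega: "A \<in> Omega n d \<Longrightarrow> support A \<subseteq> index_set n d"
  unfolding support_def using Omega_outside[of A n d] by blast

lemma finite_support_Omega: "A \<in> Omega n d \<Longrightarrow> finite (support A)"
  by (rule finite_subset[OF support_Omega finite_index_set])

lemma support_nonempty:
  assumes A: "A \<in> Omega n d" and "0 < n" "0 < d"
  shows "support A \<noteq> {}"
proof
  assume "support A = {}"
  then have "A = (\<lambda>_. 0)" unfolding support_def by auto
  moreover have "restrict (\<lambda>_. 1) {0..<d} \<in> index_set n d"
    using \<open>0 < n\<close> by (simp add: constant_in_index_set)
  ultimately show False
    using Omega_line_sum[OF A _ \<open>0 < d\<close>] by force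
qed

lemma Omega_affine_step:
  assumes D: "D \<in> Omega n d" and E: "E \<in> Omega n d"
    and nonneg: "\<And>\<alpha>. 0 \<le> D \<alpha> + s * (E \<alpha> - D \<alpha>)"
  shows "(\<lambda>\<alpha>. D \<alpha> + s * (E \<alpha> - D \<alpha>)) \<in> Omega n d"
proof (rule OmegaI)
  fix \<alpha> i assume "\<alpha> \<in> index_set n d" "i < d"
  then show "(\<Sum>k\<in>{1..n}. D (\<alpha>(i := k)) + s * (E (\<alpha>(i := k)) - D (\<alpha>(i := k)))) = 1"
    using Omega_line_sum[OF D] Omega_line_sum[OF E]
    by (simp only: sum.distrib sum_subtractf flip: sum_distrib_left) simp
qed (simp_all add: nonneg Omega_outside[OF D] Omega_outside[OF E])

lemma exists_max_step:
  fixes D G :: "'a \<Rightarrow> real"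
  assumes fin: "finite {\<alpha>. G \<alpha> < 0}" and "G \<alpha>\<^sub>0 < 0"
    and pos: "\<And>\<alpha>. G \<alpha> < 0 \<Longrightarrow> 0 < D \<alpha>"
  shows "\<exists>s>0. (\<forall>\<alpha>. 0 \<le> D \<alpha> \<longrightarrow> 0 \<le> D \<alpha> + s * G \<alpha>) \<and> (\<exists>\<alpha>. G \<alpha> < 0 \<and> D \<alpha> + s * G \<alpha> = 0)"
proof -
  define S where "S = {\<alpha>. G \<alpha> < 0}"
  define s where "s = Min ((\<lambda>\<alpha>. D \<alpha> / - G \<alpha>) ` S)"
  have "S \<noteq> {}" using \<open>G \<alpha>\<^sub>0 < 0\<close> unfolding S_def by blast
  then have "s \<in> (\<lambda>\<alpha>. D \<alpha> / - G \<alpha>) ` S"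
    unfolding s_def using fin S_def by (intro Min_in) auto
  then obtain \<alpha>\<^sub>1 where "\<alpha>\<^sub>1 \<in> S" and s: "s = D \<alpha>\<^sub>1 / - G \<alpha>\<^sub>1" by blast
  with pos have "0 < s" "D \<alpha>\<^sub>1 + s * G \<alpha>\<^sub>1 = 0"
    unfolding S_def by (auto simp: divide_pos_neg)
  moreover have "0 \<le> D \<alpha> + s * G \<alpha>" if "0 \<le> D \<alpha>" for \<alpha>
  proof (cases "G \<alpha> < 0")
    case True
    then have "s \<le> D \<alpha> / - G \<alpha>" unfolding s_def S_def using fin by simp
    moreover have "0 < - G \<alpha>" using True by simp
    ultimately have "s * - G \<alpha> \<le> D \<alpha>" by (simp only: pos_le_divide_eq)
    then show ?thesis by simp
  next
    case False
    with \<open>0 < s\<close> that show ?thesis by (simp add: add_nonneg_nonneg)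
  qed
  ultimately show ?thesis using \<open>\<alpha>\<^sub>1 \<in> S\<close> unfolding S_def by blast
qed

lemma vertex_in_Omega: "is_vertex (Omega n d) D \<Longrightarrow> D \<in> Omega n d"
  unfolding is_vertex_def by blast

lemma exists_step_beyond:
  assumes D: "D \<in> Omega n d" and E: "E \<in> Omega n d" and sub: "support E \<subseteq> support D"
  shows "\<exists>s>0. (\<lambda>\<alpha>. D \<alpha> + s * (D \<alpha> - E \<alpha>)) \<in> Omega n d"
proof -
  have pos: "0 < D \<alpha>" if "D \<alpha> - E \<alpha> < 0" for \<alpha>
  proof -
    have "E \<alpha> \<noteq> 0" using that Omega_nonneg[OF D, of \<alpha>] by auto
    then have "D \<alpha> \<noteq> 0" using sub unfolding support_def by blast
    with Omega_nonneg[OF D, of \<alpha>] show ?thesis by simp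
  qed
  obtain s where "0 < s" and nonneg: "\<And>\<alpha>. 0 \<le> D \<alpha> + s * (D \<alpha> - E \<alpha>)"
  proof (cases "\<exists>\<alpha>. D \<alpha> - E \<alpha> < 0")
    case True
    have "{\<alpha>. D \<alpha> - E \<alpha> < 0} \<subseteq> support D" using pos unfolding support_def by fastforce
    then have "finite {\<alpha>. D \<alpha> - E \<alpha> < 0}"
      by (rule finite_subset[OF _ finite_support_Omega[OF D]])
    with True pos obtain s where "0 < s" "\<forall>\<alpha>. 0 \<le> D \<alpha> \<longrightarrow> 0 \<le> D \<alpha> + s * (D \<alpha> - E \<alpha>)"
      using exists_max_step[of "\<lambda>\<alpha>. D \<alpha> - E \<alpha>"] by blast
    then show ?thesis using that Omega_nonneg[OF D] by blast
  next
    case False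
    have "0 \<le> D \<alpha> + 1 * (D \<alpha> - E \<alpha>)" for \<alpha>
      using False Omega_nonneg[OF D, of \<alpha>] by (smt (verit))
    then show ?thesis using that[of 1] by simp
  qed
  have "(\<lambda>\<alpha>. D \<alpha> + (- s) * (E \<alpha> - D \<alpha>)) \<in> Omega n d"
    using nonneg by (intro Omega_affine_step[OF D E]) (simp add: algebra_simps)
  with \<open>0 < s\<close> show ?thesis by (intro exI[of _ s]) (simp add: algebra_simps)
qed

lemma vertex_support_minimal:
  assumes v: "is_vertex (Omega n d) D" and E: "E \<in> Omega n d" and sub: "support E \<subseteq> support D"
  shows "E = D"
proof (rule ccontr)
  assume "E \<noteq> D"
  obtain s where "0 < s" and Z: "(\<lambda>\<alpha>. D \<alpha> + s * (D \<alpha> - E \<alpha>)) \<in> Omega n d" (is "?Z \<in> _")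
    using exists_step_beyond[OF vertex_in_Omega[OF v] E sub] by blast
  have "?Z \<noteq> E"
  proof
    assume "?Z = E"
    then have "(1 + s) * (D \<alpha> - E \<alpha>) = 0" for \<alpha>
      by (simp add: fun_eq_iff algebra_simps)
    with \<open>0 < s\<close> \<open>E \<noteq> D\<close> show False by (auto simp: fun_eq_iff)
  qed
  define t where "t = 1 / (1 + s)"
  have "0 < t" "t < 1" "t * (1 + s) = 1" using \<open>0 < s\<close> by (simp_all add: t_def)
  have "t * ?Z \<alpha> + (1 - t) * E \<alpha> = t * (1 + s) * D \<alpha> + (1 - t * (1 + s)) * E \<alpha>" for \<alpha>
    by (simp add: algebra_simps)
  then have "D = (\<lambda>\<alpha>. t * ?Z \<alpha> + (1 - t) * E \<alpha>)"
    using \<open>t * (1 + s) = 1\<close> by simp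
  with v E Z \<open>?Z \<noteq> E\<close> \<open>0 < t\<close> \<open>t < 1\<close> show False
    unfolding is_vertex_def by blast
qed

lemma smaller_support_toward:
  assumes D: "D \<in> Omega n d" and E: "E \<in> Omega n d" "support E \<subseteq> support D"
    and "E \<alpha>\<^sub>0 < D \<alpha>\<^sub>0"
  shows "\<exists>Z\<in>Omega n d. support Z \<subset> support D"
proof -
  have pos: "0 < D \<alpha>" if "E \<alpha> - D \<alpha> < 0" for \<alpha>
    using that Omega_nonneg[OF E(1), of \<alpha>] by simp
  have "{\<alpha>. E \<alpha> - D \<alpha> < 0} \<subseteq> support D" using pos unfolding support_def by fastforce
  then have "finite {\<alpha>. E \<alpha> - D \<alpha> < 0}"
    by (rule finite_subset[OF _ finite_support_Omega[OF D]])
  from exists_max_step[of "\<lambda>\<alpha>. E \<alpha> - D \<alpha>" \<alpha>\<^sub>0 D, OF this] pos \<open>E \<alpha>\<^sub>0 < D \<alpha>\<^sub>0\<close>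
  obtain s \<alpha>\<^sub>1 where nonneg: "\<forall>\<alpha>. 0 \<le> D \<alpha> \<longrightarrow> 0 \<le> D \<alpha> + s * (E \<alpha> - D \<alpha>)"
    and "E \<alpha>\<^sub>1 - D \<alpha>\<^sub>1 < 0" and vanish: "D \<alpha>\<^sub>1 + s * (E \<alpha>\<^sub>1 - D \<alpha>\<^sub>1) = 0"
    by auto
  define Z where "Z = (\<lambda>\<alpha>. D \<alpha> + s * (E \<alpha> - D \<alpha>))"
  have "Z \<in> Omega n d"
    unfolding Z_def using nonneg Omega_nonneg[OF D] by (intro Omega_affine_step[OF D E(1)]) blast
  moreover have "support Z \<subseteq> support D"
    using E(2) unfolding Z_def support_def by auto
  moreover have "\<alpha>\<^sub>1 \<in> support D - support Z"
    using pos[OF \<open>E \<alpha>\<^sub>1 - D \<alpha>\<^sub>1 < 0\<close>] vanish unfolding Z_def support_def by simp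
  ultimately show ?thesis by (intro bexI[of _ Z]) auto
qed

lemma not_vertex_imp_lesser_point:
  assumes "D \<in> Omega n d" and "\<not> is_vertex (Omega n d) D"
  obtains E \<alpha>\<^sub>0 where "E \<in> Omega n d" "support E \<subseteq> support D" "E \<alpha>\<^sub>0 < D \<alpha>\<^sub>0"
proof -
  obtain B C t where B: "B \<in> Omega n d" and C: "C \<in> Omega n d" and "B \<noteq> C"
    and t: "0 < t" "t < 1" and D_eq: "D = (\<lambda>\<alpha>. t * B \<alpha> + (1 - t) * C \<alpha>)"
    using assms unfolding is_vertex_def by blast
  have "0 < D \<alpha>" if "0 < B \<alpha> \<or> 0 < C \<alpha>" for \<alpha>
    using that t Omega_nonneg[OF B, of \<alpha>] Omega_nonneg[OF C, of \<alpha>] unfolding D_eq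
    by (auto intro: add_pos_nonneg add_nonneg_pos)
  then have "support B \<subseteq> support D" "support C \<subseteq> support D"
    using Omega_nonneg[OF B] Omega_nonneg[OF C] unfolding support_def
    by (fastforce simp: less_le)+
  obtain \<alpha>\<^sub>0 where "B \<alpha>\<^sub>0 \<noteq> C \<alpha>\<^sub>0" using \<open>B \<noteq> C\<close> by blast
  moreover have "D \<alpha>\<^sub>0 - B \<alpha>\<^sub>0 = (1 - t) * (C \<alpha>\<^sub>0 - B \<alpha>\<^sub>0)"
    and "D \<alpha>\<^sub>0 - C \<alpha>\<^sub>0 = t * (B \<alpha>\<^sub>0 - C \<alpha>\<^sub>0)"
    unfolding D_eq by (simp_all add: algebra_simps)
  ultimately have "B \<alpha>\<^sub>0 < D \<alpha>\<^sub>0 \<or> C \<alpha>\<^sub>0 < D \<alpha>\<^sub>0"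
    using t by (smt (verit) mult_pos_pos)
  with that B C \<open>support B \<subseteq> support D\<close> \<open>support C \<subseteq> support D\<close> show ?thesis by blast
qed

lemma smaller_support_if_not_vertex:
  assumes "D \<in> Omega n d" and "\<not> is_vertex (Omega n d) D"
  shows "\<exists>Z\<in>Omega n d. support Z \<subset> support D"
  using not_vertex_imp_lesser_point[OF assms] smaller_support_toward[OF assms(1)] by metis

lemma exists_vertex_below:
  assumes "X \<in> Omega n d"
  shows "\<exists>v. is_vertex (Omega n d) v \<and> support v \<subseteq> support X"
  using assms
proof (induction "card (support X)" arbitrary: X rule: less_induct)
  case less
  show ?case
  proof (cases "is_vertex (Omega n d) X")
    case False
    then obtain Z where Z: "Z \<in> Omega n d" "support Z \<subset> support X"
      using smaller_support_if_not_vertex less.prems by blast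
    then have "card (support Z) < card (support X)"
      using finite_support_Omega[OF less.prems] by (simp add: psubset_card_mono)
    with less.hyps Z show ?thesis by blast
  qed blast
qed

lemma finite_vertices: "finite {A. is_vertex (Omega n d) A}"
proof (rule finite_imageD)
  show "inj_on support {A. is_vertex (Omega n d) A}"
    by (rule inj_onI) (metis mem_Collect_eq order_refl vertex_in_Omega vertex_support_minimal)
  have "support ` {A. is_vertex (Omega n d) A} \<subseteq> Pow (index_set n d)"
    using support_Omega vertex_in_Omega by blast
  then show "finite (support ` {A. is_vertex (Omega n d) A})"
    using finite_index_set finite_subset by blast
qed

definition separated :: "nat \<Rightarrow> nat \<Rightarrow> ((nat \<Rightarrow> nat) \<Rightarrow> real) set \<Rightarrow> bool" where
  "separated n d F \<longleftrightarrow> F \<subseteq> Omega n d \<and>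
     (\<forall>X\<in>F. \<forall>Y\<in>F. X \<noteq> Y \<longrightarrow> (\<forall>D\<in>Omega n d. \<not> support D \<subseteq> support X \<inter> support Y))"

lemma card_separated_le_num_vertices:
  assumes F: "separated n d F"
  shows "card F \<le> num_vertices n d"
proof -
  have "\<forall>X\<in>F. \<exists>v. is_vertex (Omega n d) v \<and> support v \<subseteq> support X"
    using F exists_vertex_below unfolding separated_def by blast
  then obtain v where v: "\<And>X. X \<in> F \<Longrightarrow> is_vertex (Omega n d) (v X) \<and> support (v X) \<subseteq> support X"
    by metis
  have "inj_on v F"
  proof (rule inj_onI, rule ccontr)
    fix X Y assume "X \<in> F" "Y \<in> F" "v X = v Y" "X \<noteq> Y"
    with v[OF \<open>X \<in> F\<close>] v[OF \<open>Y \<in> F\<close>] vertex_in_Omega F show False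
      unfolding separated_def by (metis le_inf_iff)
  qed
  moreover have "v ` F \<subseteq> {A. is_vertex (Omega n d) A}" using v by blast
  ultimately show ?thesis
    unfolding num_vertices_def using card_inj_on_le finite_vertices by blast
qed

section \<open>Slices\<close>

definition extend :: "nat \<Rightarrow> (nat \<Rightarrow> nat) \<Rightarrow> (nat \<Rightarrow> nat) \<Rightarrow> nat \<Rightarrow> nat" where
  "extend d x \<beta> = (\<lambda>i. if i < d then x i else \<beta> i)"

definition slice :: "nat \<Rightarrow> nat \<Rightarrow> (nat \<Rightarrow> nat) \<Rightarrow> ((nat \<Rightarrow> nat) \<Rightarrow> real) \<Rightarrow> (nat \<Rightarrow> nat) \<Rightarrow> real" where
  "slice n d \<beta> D = (\<lambda>x. if x \<in> index_set n d then D (extend d x \<beta>) else 0)"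

lemma extend_in_index_set:
  "x \<in> index_set n d \<Longrightarrow> \<beta> \<in> index_set n (d + m) \<Longrightarrow> extend d x \<beta> \<in> index_set n (d + m)"
  unfolding index_set_def extend_def by (auto simp: PiE_iff extensional_def)

lemma extend_upd: "i < d \<Longrightarrow> extend d (x(i := k)) \<beta> = (extend d x \<beta>)(i := k)"
  unfolding extend_def by auto

lemma restrict_extend: "x \<in> index_set n d \<Longrightarrow> restrict (extend d x \<beta>) {0..<d} = x"
  unfolding index_set_def extend_def by (auto simp: PiE_iff extensional_def)

lemma slice_in_Omega:
  assumes D: "D \<in> Omega n (d + m)" and \<beta>: "\<beta> \<in> index_set n (d + m)"
  shows "slice n d \<beta> D \<in> Omega n d"
proof (rule OmegaI)
  fix x i assume x: "x \<in> index_set n d" and "i < d"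
  have "(\<Sum>k\<in>{1..n}. slice n d \<beta> D (x(i := k))) = (\<Sum>k\<in>{1..n}. D ((extend d x \<beta>)(i := k)))"
    using x \<open>i < d\<close> by (intro sum.cong) (auto simp: slice_def index_set_upd extend_upd)
  also have "\<dots> = 1"
    using Omega_line_sum[OF D extend_in_index_set[OF x \<beta>]] \<open>i < d\<close> by simp
  finally show "(\<Sum>k\<in>{1..n}. slice n d \<beta> D (x(i := k))) = 1" .
qed (simp_all add: slice_def Omega_nonneg[OF D])

lemma separated_by_slices:
  assumes F: "separated n d F" and G: "G \<subseteq> Omega n (d + m)"
    and slices: "\<And>X Y. X \<in> G \<Longrightarrow> Y \<in> G \<Longrightarrow> X \<noteq> Y \<Longrightarrow>
      \<exists>\<beta>\<in>index_set n (d + m). slice n d \<beta> X \<in> F \<and> slice n d \<beta> Y \<in> F \<and> slice n d \<beta> X \<noteq> slice n d \<beta> Y"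
  shows "separated n (d + m) G"
  unfolding separated_def
proof (intro conjI G ballI impI notI)
  fix X Y D assume "X \<in> G" "Y \<in> G" "X \<noteq> Y" and D: "D \<in> Omega n (d + m)"
    and sub: "support D \<subseteq> support X \<inter> support Y"
  obtain \<beta> where \<beta>: "\<beta> \<in> index_set n (d + m)" and "slice n d \<beta> X \<in> F" "slice n d \<beta> Y \<in> F"
    and "slice n d \<beta> X \<noteq> slice n d \<beta> Y"
    using slices[OF \<open>X \<in> G\<close> \<open>Y \<in> G\<close> \<open>X \<noteq> Y\<close>] by blast
  moreover have "support (slice n d \<beta> D) \<subseteq> support (slice n d \<beta> X) \<inter> support (slice n d \<beta> Y)"
    using sub unfolding support_def slice_def by auto
  ultimately show False
    using F slice_in_Omega[OF D \<beta>] unfolding separated_def by blast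
qed

section \<open>The gluing gadget\<close>

lemma atLeastAtMost_1_3: "{1..3::nat} = {1, 2, 3}"
  by auto

text \<open>
  The positions with a + b + c divisible by 3 form a Latin square: every line of the 3x3x3 cube
  meets them exactly once, and there twist is the identity while elsewhere it is r \<mapsto> (1 - r)/2,
  so twisting a constant along a line gives sum 1. In every line the weight at that position is
  the mean of the other two weights, which makes the u and v contributions cancel as well; hence
  every gadget line sums to 1 for all u, v. The weights 1 at (1,1,1) and 0 at (2,2,2) make u and
  v reappear as slices.
\<close>

definition twist :: "bool \<Rightarrow> real \<Rightarrow> real" where
  "twist p r = (if p then r else (1 - r) / 2)"

definition weight :: "nat \<Rightarrow> nat \<Rightarrow> nat \<Rightarrow> real" where
  "weight a b c =
     [[[1, 1, 1], [1, 0, 1/2], [1, 1/2, 0]],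
      [[1, 0, 1/2], [0, 0, 0], [1/2, 0, 1]],
      [[1, 1/2, 0], [1/2, 0, 1], [0, 1, 1/2]]] ! (a - 1) ! (b - 1) ! (c - 1)"

definition gadget :: "nat \<Rightarrow> nat \<Rightarrow> nat \<Rightarrow> real \<Rightarrow> real \<Rightarrow> real" where
  "gadget a b c u v = twist ((a + b + c) mod 3 = 0) (weight a b c * u + (1 - weight a b c) * v)"

definition combine :: "nat \<Rightarrow> ((nat \<Rightarrow> nat) \<Rightarrow> real) \<Rightarrow> ((nat \<Rightarrow> nat) \<Rightarrow> real) \<Rightarrow> (nat \<Rightarrow> nat) \<Rightarrow> real" where
  "combine d A B \<alpha> = (if \<alpha> \<in> index_set 3 (d + 3)
     then gadget (\<alpha> d) (\<alpha> (d + 1)) (\<alpha> (d + 2)) (A (restrict \<alpha> {0..<d})) (B (restrict \<alpha> {0..<d}))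
     else 0)"

lemma sum_twist: "(\<Sum>k\<in>{1..3::nat}. f k) = 1 \<Longrightarrow> (\<Sum>k\<in>{1..3::nat}. twist p (f k)) = 1"
  unfolding atLeastAtMost_1_3 by (cases p) (simp_all add: twist_def field_simps)

lemma twist_nonneg: "0 \<le> r \<Longrightarrow> r \<le> 1 \<Longrightarrow> 0 \<le> twist p r"
  by (simp add: twist_def)

lemma weight_bounds: "a \<in> {1..3} \<Longrightarrow> b \<in> {1..3} \<Longrightarrow> c \<in> {1..3} \<Longrightarrow> 0 \<le> weight a b c \<and> weight a b c \<le> 1"
  unfolding atLeastAtMost_1_3 by (auto simp: weight_def)

lemma gadget_nonneg:
  assumes "a \<in> {1..3}" "b \<in> {1..3}" "c \<in> {1..3}" "0 \<le> u" "u \<le> 1" "0 \<le> v" "v \<le> 1"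
  shows "0 \<le> gadget a b c u v"
  unfolding gadget_def using weight_bounds[of a b c] assms
  by (intro twist_nonneg) (auto intro: convex_bound_le)

lemma gadget_diagonal: "gadget 1 1 1 u v = u" "gadget 2 2 2 u v = v"
  by (simp_all add: gadget_def twist_def weight_def)

lemma sum_gadget_affine:
  assumes "(\<Sum>k\<in>{1..3::nat}. f k) = 1" "(\<Sum>k\<in>{1..3::nat}. g k) = 1"
  shows "(\<Sum>k\<in>{1..3::nat}. gadget a b c (f k) (g k)) = 1"
  unfolding gadget_def using assms
  by (intro sum_twist) (simp add: sum.distrib flip: sum_distrib_left)

lemma gadget_line_sums:
  shows "b \<in> {1..3} \<Longrightarrow> c \<in> {1..3} \<Longrightarrow> (\<Sum>k\<in>{1..3}. gadget k b c u v) = 1"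
    and "a \<in> {1..3} \<Longrightarrow> c \<in> {1..3} \<Longrightarrow> (\<Sum>k\<in>{1..3}. gadget a k c u v) = 1"
    and "a \<in> {1..3} \<Longrightarrow> b \<in> {1..3} \<Longrightarrow> (\<Sum>k\<in>{1..3}. gadget a b k u v) = 1"
  unfolding atLeastAtMost_1_3
  by (elim insertE emptyE; simp add: gadget_def twist_def weight_def field_simps)+

lemma combine_in_Omega:
  assumes A: "A \<in> Omega 3 d" and B: "B \<in> Omega 3 d" and "0 < d"
  shows "combine d A B \<in> Omega 3 (d + 3)"
proof (rule OmegaI)
  fix \<alpha> assume \<alpha>: "\<alpha> \<in> index_set 3 (d + 3)"
  show "0 \<le> combine d A B \<alpha>"
    unfolding combine_def if_P[OF \<alpha>]
    using index_set_range[OF \<alpha>] Omega_nonneg[OF A] Omega_nonneg[OF B]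
      Omega_le_one[OF A \<open>0 < d\<close>] Omega_le_one[OF B \<open>0 < d\<close>]
    by (intro gadget_nonneg) auto
next
  fix \<alpha> i assume \<alpha>: "\<alpha> \<in> index_set 3 (d + 3)" and "i < d + 3"
  define x where "x = restrict \<alpha> {0..<d}"
  have x: "x \<in> index_set 3 d" unfolding x_def using restrict_in_index_set[OF \<alpha>] .
  have range: "\<alpha> d \<in> {1..3}" "\<alpha> (d + 1) \<in> {1..3}" "\<alpha> (d + 2) \<in> {1..3}"
    using index_set_range[OF \<alpha>] by auto
  have "(\<Sum>k\<in>{1..3}. combine d A B (\<alpha>(i := k))) =
      (\<Sum>k\<in>{1..3}. gadget ((\<alpha>(i := k)) d) ((\<alpha>(i := k)) (d + 1)) ((\<alpha>(i := k)) (d + 2))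
         (A (restrict (\<alpha>(i := k)) {0..<d})) (B (restrict (\<alpha>(i := k)) {0..<d})))"
    using index_set_upd[OF \<alpha> \<open>i < d + 3\<close>] by (intro sum.cong) (simp_all add: combine_def)
  also have "\<dots> = 1"
  proof (cases "i < d")
    case True
    then have "restrict (\<alpha>(i := k)) {0..<d} = x(i := k)" for k
      unfolding x_def by (auto simp: restrict_def)
    moreover have "(\<Sum>k\<in>{1..3}. gadget (\<alpha> d) (\<alpha> (d + 1)) (\<alpha> (d + 2)) (A (x(i := k))) (B (x(i := k)))) = 1"
      by (rule sum_gadget_affine[OF Omega_line_sum[OF A x True] Omega_line_sum[OF B x True]])
    ultimately show ?thesis using True by simp
  next
    case False
    then have "restrict (\<alpha>(i := k)) {0..<d} = x" for k
      unfolding x_def by (auto simp: restrict_def)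
    moreover have "i = d \<or> i = d + 1 \<or> i = d + 2" using False \<open>i < d + 3\<close> by auto
    ultimately show ?thesis
      using gadget_line_sums(1)[OF range(2,3)] gadget_line_sums(2)[OF range(1,3)]
        gadget_line_sums(3)[OF range(1,2)]
      by auto
  qed
  finally show "(\<Sum>k\<in>{1..3}. combine d A B (\<alpha>(i := k))) = 1" .
qed (simp add: combine_def)

lemma slice_combine:
  assumes "A \<in> Omega 3 d" "B \<in> Omega 3 d" "c \<in> {1..3}"
  shows "slice 3 d (restrict (\<lambda>_. c) {0..<d + 3}) (combine d A B) = (\<lambda>x. gadget c c c (A x) (B x))"
proof
  fix x
  let ?\<beta> = "restrict (\<lambda>_. c) {0..<d + 3}"
  show "slice 3 d ?\<beta> (combine d A B) x = gadget c c c (A x) (B x)"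
  proof (cases "x \<in> index_set 3 d")
    case True
    have "?\<beta> \<in> index_set 3 (d + 3)"
      using assms(3) by (rule constant_in_index_set)
    then have "extend d x ?\<beta> \<in> index_set 3 (d + 3)"
      by (rule extend_in_index_set[OF True])
    moreover have "restrict (extend d x ?\<beta>) {0..<d} = x"
      by (rule restrict_extend[OF True])
    moreover have "extend d x ?\<beta> d = c" "extend d x ?\<beta> (d + 1) = c" "extend d x ?\<beta> (d + 2) = c"
      unfolding extend_def by simp_all
    ultimately show ?thesis
      using True unfolding slice_def combine_def by simp
  next
    case False
    then show ?thesis
      using assms Omega_outside[OF assms(1)] Omega_outside[OF assms(2)]
      unfolding slice_def atLeastAtMost_1_3 by (auto simp: gadget_def twist_def weight_def)
  qed
qed

lemma slice_combine_fst:
  assumes "A \<in> Omega 3 d" "B \<in> Omega 3 d"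
  shows "slice 3 d (restrict (\<lambda>_. 1) {0..<d + 3}) (combine d A B) = A"
  using slice_combine[OF assms, of 1] unfolding gadget_diagonal by simp

lemma slice_combine_snd:
  assumes "A \<in> Omega 3 d" "B \<in> Omega 3 d"
  shows "slice 3 d (restrict (\<lambda>_. 2) {0..<d + 3}) (combine d A B) = B"
  using slice_combine[OF assms, of 2] unfolding gadget_diagonal by simp

lemma separated_combine:
  assumes F: "separated 3 d F" and "0 < d"
  shows "separated 3 (d + 3) ((\<lambda>(A, B). combine d A B) ` (F \<times> F))"
    and "card ((\<lambda>(A, B). combine d A B) ` (F \<times> F)) = card F * card F"
proof -
  let ?\<Phi> = "\<lambda>(A, B). combine d A B"
  have "F \<subseteq> Omega 3 d" using F unfolding separated_def by blast
  have slices: "slice 3 d (restrict (\<lambda>_. 1) {0..<d + 3}) (combine d A B) = A"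
    "slice 3 d (restrict (\<lambda>_. 2) {0..<d + 3}) (combine d A B) = B" if "A \<in> F" "B \<in> F" for A B
    using that \<open>F \<subseteq> Omega 3 d\<close> by (blast intro: slice_combine_fst slice_combine_snd)+
  have separating_slice: "\<exists>\<beta>\<in>index_set 3 (d + 3). slice 3 d \<beta> (combine d A B) \<in> F
      \<and> slice 3 d \<beta> (combine d A' B') \<in> F \<and> slice 3 d \<beta> (combine d A B) \<noteq> slice 3 d \<beta> (combine d A' B')"
    if "A \<in> F" "B \<in> F" "A' \<in> F" "B' \<in> F" "(A, B) \<noteq> (A', B')" for A B A' B'
  proof (cases "A = A'")
    case True
    then show ?thesis
      using that slices constant_in_index_set[of 2] by (intro bexI[of _ "restrict (\<lambda>_. 2) {0..<d + 3}"]) auto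
  next
    case False
    then show ?thesis
      using that slices constant_in_index_set[of 1] by (intro bexI[of _ "restrict (\<lambda>_. 1) {0..<d + 3}"]) auto
  qed
  have "inj_on ?\<Phi> (F \<times> F)"
    by (rule inj_onI, rule ccontr) (use separating_slice in fastforce)
  then show "card (?\<Phi> ` (F \<times> F)) = card F * card F"
    by (simp add: card_image card_cartesian_product)
  have "?\<Phi> ` (F \<times> F) \<subseteq> Omega 3 (d + 3)"
    using \<open>F \<subseteq> Omega 3 d\<close> by (auto intro: combine_in_Omega[OF _ _ \<open>0 < d\<close>])
  then show "separated 3 (d + 3) (?\<Phi> ` (F \<times> F))"
  proof (rule separated_by_slices[OF F])
    fix X Y assume "X \<in> ?\<Phi> ` (F \<times> F)" "Y \<in> ?\<Phi> ` (F \<times> F)" "X \<noteq> Y"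
    then obtain A B A' B' where "A \<in> F" "B \<in> F" "A' \<in> F" "B' \<in> F"
      and "X = combine d A B" "Y = combine d A' B'" by auto
    with \<open>X \<noteq> Y\<close> separating_slice show "\<exists>\<beta>\<in>index_set 3 (d + 3). slice 3 d \<beta> X \<in> F \<and>
        slice 3 d \<beta> Y \<in> F \<and> slice 3 d \<beta> X \<noteq> slice 3 d \<beta> Y"
      by blast
  qed
qed

section \<open>Counting\<close>

definition latin_cube :: "nat \<Rightarrow> nat \<Rightarrow> (nat \<Rightarrow> nat) \<Rightarrow> real" where
  "latin_cube d r \<alpha> = (if \<alpha> \<in> index_set 3 d \<and> (\<Sum>i<d. \<alpha> i) mod 3 = r then 1 else 0)"

lemma latin_cube_in_Omega:
  assumes "r < 3"
  shows "latin_cube d r \<in> Omega 3 d"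
proof (rule OmegaI)
  fix \<alpha> i assume \<alpha>: "\<alpha> \<in> index_set 3 d" and "i < d"
  define s where "s = (\<Sum>j\<in>{..<d} - {i}. \<alpha> j)"
  have "(\<Sum>k\<in>{1..3}. latin_cube d r (\<alpha>(i := k))) = (\<Sum>k\<in>{1..3::nat}. if (k + s) mod 3 = r then 1 else 0)"
    using \<alpha> \<open>i < d\<close> unfolding s_def
    by (intro sum.cong) (simp_all add: latin_cube_def index_set_upd sum.remove)
  also have "\<dots> = 1"
  proof -
    have "(k + s) mod 3 = (k + s mod 3) mod 3" for k by presburger
    moreover have "s mod 3 \<in> {0, 1, 2}" by auto
    ultimately show ?thesis using \<open>r < 3\<close> unfolding atLeastAtMost_1_3 by auto
  qed
  finally show "(\<Sum>k\<in>{1..3}. latin_cube d r (\<alpha>(i := k))) = 1" .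
qed (simp_all add: latin_cube_def)

lemma separated_latin_cubes:
  assumes "0 < d"
  shows "separated 3 d {latin_cube d 0, latin_cube d 1}"
    and "card {latin_cube d 0, latin_cube d 1} = 2"
proof -
  have Omega: "latin_cube d 0 \<in> Omega 3 d" "latin_cube d 1 \<in> Omega 3 d"
    by (simp_all add: latin_cube_in_Omega)
  have disjoint: "support (latin_cube d 0) \<inter> support (latin_cube d 1) = {}"
    unfolding support_def latin_cube_def by auto
  have nonempty: "support D \<noteq> {}" if "D \<in> Omega 3 d" for D
    using support_nonempty[OF that _ \<open>0 < d\<close>] by simp
  show "separated 3 d {latin_cube d 0, latin_cube d 1}"
    unfolding separated_def
  proof (intro conjI ballI impI notI)
    fix X Y D assume "X \<in> {latin_cube d 0, latin_cube d 1}" "Y \<in> {latin_cube d 0, latin_cube d 1}" "X \<noteq> Y"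
      and "D \<in> Omega 3 d" "support D \<subseteq> support X \<inter> support Y"
    then have "support D \<subseteq> support (latin_cube d 0) \<inter> support (latin_cube d 1)" by auto
    with disjoint nonempty[OF \<open>D \<in> Omega 3 d\<close>] show False by blast
  qed (use Omega in simp)
  have "latin_cube d 0 \<noteq> latin_cube d 1"
    using disjoint support_nonempty[OF Omega(1) _ \<open>0 < d\<close>] by auto
  then show "card {latin_cube d 0, latin_cube d 1} = 2" by simp
qed

lemma exists_large_separated:
  assumes "0 < d"
  shows "\<exists>F. separated 3 d F \<and> 2 ^ 2 ^ ((d - 1) div 3) \<le> card F"
  using assms
proof (induction d rule: less_induct)
  case (less d)
  show ?case
  proof (cases "d \<le> 3")
    case True
    then have "(d - 1) div 3 = 0" by simp
    then show ?thesis using separated_latin_cubes[OF less.prems] by fastforce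
  next
    case False
    then obtain F where F: "separated 3 (d - 3) F" "2 ^ 2 ^ ((d - 3 - 1) div 3) \<le> card F"
      using less.IH[of "d - 3"] by auto
    have "(d - 1) div 3 = Suc ((d - 3 - 1) div 3)" using False by simp
    then have "(2::nat) ^ 2 ^ ((d - 1) div 3) = 2 ^ 2 ^ ((d - 3 - 1) div 3) * 2 ^ 2 ^ ((d - 3 - 1) div 3)"
      by (simp add: power_add[symmetric] mult_2)
    also have "\<dots> \<le> card F * card F" using F(2) by (intro mult_mono) auto
    finally have "2 ^ 2 ^ ((d - 1) div 3) \<le> card ((\<lambda>(A, B). combine (d - 3) A B) ` (F \<times> F))"
      using separated_combine(2)[OF F(1)] False by simp
    moreover have "separated 3 d ((\<lambda>(A, B). combine (d - 3) A B) ` (F \<times> F))"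
      using separated_combine(1)[OF F(1)] False by simp
    ultimately show ?thesis by blast
  qed
qed

lemma log_num_vertices_3_ge:
  assumes "0 < d"
  shows "2 ^ ((d - 1) div 3) \<le> log 2 (num_vertices 3 d)"
proof -
  obtain F where "separated 3 d F" and F: "2 ^ 2 ^ ((d - 1) div 3) \<le> card F"
    using exists_large_separated[OF assms] by blast
  then have "2 ^ 2 ^ ((d - 1) div 3) \<le> num_vertices 3 d"
    using card_separated_le_num_vertices le_trans by blast
  then have "(2::real) ^ 2 ^ ((d - 1) div 3) \<le> num_vertices 3 d"
    by (metis numeral_power_le_of_nat_cancel_iff)
  then have "log 2 (2 ^ 2 ^ ((d - 1) div 3)) \<le> log 2 (num_vertices 3 d)"
    by (subst log_le_cancel_iff) (auto intro: less_le_trans[of 0 "2 ^ _"])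
  then show ?thesis by (simp add: log_nat_power)
qed

lemma powr_le_power_div_3:
  fixes \<epsilon> :: real
  assumes "\<epsilon> \<le> 1/2" and "4 \<le> d"
  shows "2 powr (\<epsilon> / 8 * real d) \<le> 2 ^ ((d - 1) div 3)"
proof -
  have "d \<le> 3 * ((d - 1) div 3) + 3" by linarith
  then have "real d / 16 \<le> real ((d - 1) div 3)" using \<open>4 \<le> d\<close> by linarith
  moreover have "\<epsilon> * real d \<le> 1/2 * real d"
    using \<open>\<epsilon> \<le> 1/2\<close> by (intro mult_right_mono) auto
  ultimately show ?thesis by (simp add: powr_realpow[symmetric])
qed

theorem theorem5:
  fixes \<epsilon> :: real
  assumes "0 < \<epsilon>" "\<epsilon> \<le> 1/2" "1 - bin_entropy \<epsilon> = \<epsilon> / 8"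
  shows "\<exists>g :: nat \<Rightarrow> real. g \<longlonglongrightarrow> 0 \<and>
           (\<forall>\<^sub>F d in sequentially.
              log 2 (real (num_vertices 3 d))
                \<ge> (1/4 * log 2 (9/5)) * 2 powr ((\<epsilon> / 8) * real d) * (1 + g d))"
proof (intro exI[of _ "\<lambda>_. 0"] conjI)
  have "log 2 (9/5) \<le> (1::real)" using log_le_cancel_iff[of 2 "9/5" 2] by simp
  then have c: "1/4 * log 2 (9/5) \<le> (1::real)" by linarith
  have "(1/4 * log 2 (9/5)) * 2 powr (\<epsilon> / 8 * real d) \<le> log 2 (num_vertices 3 d)"
    if "4 \<le> d" for d
  proof -
    have "(1/4 * log 2 (9/5)) * 2 powr (\<epsilon> / 8 * real d) \<le> 2 powr (\<epsilon> / 8 * real d)"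
      using mult_right_mono[OF c, of "2 powr (\<epsilon> / 8 * real d)"] by simp
    also have "\<dots> \<le> 2 ^ ((d - 1) div 3)"
      by (rule powr_le_power_div_3[OF \<open>\<epsilon> \<le> 1/2\<close> that])
    also have "\<dots> \<le> log 2 (num_vertices 3 d)"
      using that by (intro log_num_vertices_3_ge) simp
    finally show ?thesis .
  qed
  then show "\<forall>\<^sub>F d in sequentially. (1/4 * log 2 (9/5)) * 2 powr ((\<epsilon> / 8) * real d) * (1 + 0)
      \<le> log 2 (num_vertices 3 d)"
    unfolding eventually_sequentially by auto
qed simp

end
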